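(* Every Menger proper $K$-Lusin space is $\sigma$-compact.
   Context: All spaces are completely regular. A space is Lusin if it is an injective continuous image of the space $\mathbb{P}$ of irrationals. A space is proper $K$-Lusin if it admits a perfect map (continuous closed surjection with compact fibers) onto a Lusin subspace of $\mathbb{R}^\omega$. $X$ is Menger if for every sequence $(\mathcal{U}_n)_{n<\omega}$ of open covers there are finite $\mathcal{V}_n\subseteq\mathcal{U}_n$ with $\bigcup_n\mathcal{V}_n$ covering $X$. *)

theory Defs
  imports "HOL-Analysis.Analysis"
begin

definition irrationals_top :: "real topology" where
  "irrationals_top = subtopology euclideanreal (- \<rat>)"

definition lusin_space :: "'a topology \<Rightarrow> bool" where
  "lusin_space X \<longleftrightarrow>
     (\<exists>g. continuous_map irrationals_top X g \<and> inj_on g (topspace irrationals_top)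
          \<and> g ` topspace irrationals_top = topspace X)"

definition real_omega :: "(nat \<Rightarrow> real) topology" where
  "real_omega = product_topology (\<lambda>_. euclideanreal) UNIV"

definition proper_K_lusin :: "'a topology \<Rightarrow> bool" where
  "proper_K_lusin X \<longleftrightarrow>
     (\<exists>(f :: 'a \<Rightarrow> nat \<Rightarrow> real) L. L \<subseteq> topspace real_omega
        \<and> lusin_space (subtopology real_omega L)
        \<and> perfect_map X (subtopology real_omega L) f)"

definition open_cover :: "'a topology \<Rightarrow> 'a set set \<Rightarrow> bool" where
  "open_cover X \<U> \<longleftrightarrow> (\<forall>U\<in>\<U>. openin X U) \<and> topspace X \<subseteq> \<Union>\<U>"

definition menger_space :: "'a topology \<Rightarrow> bool" where
  "menger_space X \<longleftrightarrow>
     (\<forall>\<U> :: nat \<Rightarrow> 'a set set. (\<forall>n. open_cover X (\<U> n)) \<longrightarrow>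
        (\<exists>\<V>. (\<forall>n. finite (\<V> n) \<and> \<V> n \<subseteq> \<U> n) \<and> topspace X \<subseteq> (\<Union>n. \<Union>(\<V> n))))"

definition sigma_compact_space :: "'a topology \<Rightarrow> bool" where
  "sigma_compact_space X \<longleftrightarrow>
     (\<exists>K :: nat \<Rightarrow> 'a set. (\<forall>n. compactin X (K n)) \<and> (\<Union>n. K n) = topspace X)"

end

theory Submission
  imports Defs
begin

text \<open>Menger spaces map onto Menger spaces and perfect preimages of \<sigma>-compact spaces are
  \<sigma>-compact, so it suffices to show that a Menger space \<open>L\<close>, the continuous image under \<open>g\<close> of
  the irrationals, is \<sigma>-compact (Hurewicz). Remove from the irrationals the largest open set \<open>W\<close>
  whose image is covered by countably many compact subsets of \<open>L\<close>. If a remainder \<open>F\<close> is left,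
  the image of every open set meeting \<open>F\<close> escapes all compact subsets of \<open>L\<close>, which yields an
  injective sequence in it without accumulation points in \<open>L\<close>. Iterating this produces a tree of
  shrinking closed balls around points of \<open>F\<close>, with images inside disjoint balls of \<open>L\<close> that form
  locally finite levels. Each level gives an open cover of \<open>L\<close>; a branch dodging the finite
  selections of a Menger sequence of these covers shrinks to an irrational point whose image
  lies in none of the selected sets.\<close>

section \<open>Menger and \<sigma>-compact spaces under maps\<close>

lemma menger_space_continuous_image:
  assumes "menger_space X" "continuous_map X Y f" "f ` topspace X = topspace Y"
  shows "menger_space Y"
  unfolding menger_space_def
proof (intro allI impI)
  fix \<U> :: "nat \<Rightarrow> 'b set set"
  assume "\<forall>n. open_cover Y (\<U> n)"
  then have \<U>: "\<And>n U. U \<in> \<U> n \<Longrightarrow> openin Y U" "\<And>n. topspace Y \<subseteq> \<Union>(\<U> n)"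
    unfolding open_cover_def by blast+
  define pre where "pre U = {x \<in> topspace X. f x \<in> U}" for U
  have "open_cover X (pre ` \<U> n)" for n
    unfolding open_cover_def
  proof (intro conjI ballI subsetI)
    fix V assume "V \<in> pre ` \<U> n"
    then show "openin X V"
      unfolding pre_def using openin_continuous_map_preimage[OF assms(2)] \<U>(1) by blast
  next
    fix x assume "x \<in> topspace X"
    then show "x \<in> \<Union>(pre ` \<U> n)"
      using \<U>(2)[of n] assms(3) unfolding pre_def by blast
  qed
  then obtain \<V>' where \<V>': "\<And>n. finite (\<V>' n)" "\<And>n. \<V>' n \<subseteq> pre ` \<U> n"
    "topspace X \<subseteq> (\<Union>n. \<Union>(\<V>' n))"
    using assms(1) unfolding menger_space_def by meson
  have "\<exists>\<C>. \<C> \<subseteq> \<U> n \<and> finite \<C> \<and> \<V>' n = pre ` \<C>" for n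
    using \<V>'(1,2) finite_subset_image by meson
  then obtain \<V> where \<V>: "\<And>n. \<V> n \<subseteq> \<U> n" "\<And>n. finite (\<V> n)" "\<And>n. \<V>' n = pre ` \<V> n"
    by metis
  have "topspace Y \<subseteq> (\<Union>n. \<Union>(\<V> n))"
  proof
    fix y assume "y \<in> topspace Y"
    then obtain x where x: "x \<in> topspace X" "y = f x"
      using assms(3) by blast
    then obtain n V where "V \<in> \<V>' n" "x \<in> V"
      using \<V>'(3) by blast
    then obtain U where "U \<in> \<V> n" "V = pre U"
      using \<V>(3) by blast
    then show "y \<in> (\<Union>n. \<Union>(\<V> n))"
      using x \<open>x \<in> V\<close> unfolding pre_def by blast
  qed
  with \<V> show "\<exists>\<V>. (\<forall>n. finite (\<V> n) \<and> \<V> n \<subseteq> \<U> n) \<and> topspace Y \<subseteq> (\<Union>n. \<Union>(\<V> n))"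
    by blast
qed

lemma sigma_compact_space_proper_map_preimage:
  assumes "proper_map X Y f" "sigma_compact_space Y"
  shows "sigma_compact_space X"
proof -
  obtain K :: "nat \<Rightarrow> 'b set" where K: "\<And>n. compactin Y (K n)" "(\<Union>n. K n) = topspace Y"
    using assms(2) unfolding sigma_compact_space_def by blast
  have "(\<Union>n. {x \<in> topspace X. f x \<in> K n}) = topspace X"
    using K(2) proper_map_imp_subset_topspace[OF assms(1)] by (auto simp: Pi_iff)
  moreover have "compactin X {x \<in> topspace X. f x \<in> K n}" for n
    using compactin_proper_map_preimage[OF assms(1) K(1)] by simp
  ultimately show ?thesis
    unfolding sigma_compact_space_def by (intro exI[of _ "\<lambda>n. {x \<in> topspace X. f x \<in> K n}"]) simp
qed

section \<open>Covering by countably many compact sets\<close>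

definition covered_by_sigma_compact :: "'a::topological_space set \<Rightarrow> 'a set \<Rightarrow> bool" where
  "covered_by_sigma_compact L S \<longleftrightarrow>
     (\<exists>\<K>. countable \<K> \<and> (\<forall>K\<in>\<K>. compact K \<and> K \<subseteq> L) \<and> S \<subseteq> \<Union>\<K>)"

lemma covered_by_sigma_compact_subset:
  "covered_by_sigma_compact L T \<Longrightarrow> S \<subseteq> T \<Longrightarrow> covered_by_sigma_compact L S"
  unfolding covered_by_sigma_compact_def by (meson subset_trans)

lemma covered_by_sigma_compact_compact:
  "compact K \<Longrightarrow> K \<subseteq> L \<Longrightarrow> covered_by_sigma_compact L K"
  unfolding covered_by_sigma_compact_def by (intro exI[of _ "{K}"]) auto

lemma covered_by_sigma_compact_countable_Union:
  assumes "countable \<S>" "\<And>S. S \<in> \<S> \<Longrightarrow> covered_by_sigma_compact L S"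
  shows "covered_by_sigma_compact L (\<Union>\<S>)"
proof -
  have "\<forall>S\<in>\<S>. \<exists>\<K>. countable \<K> \<and> (\<forall>K\<in>\<K>. compact K \<and> K \<subseteq> L) \<and> S \<subseteq> \<Union>\<K>"
    using assms(2) unfolding covered_by_sigma_compact_def by blast
  then obtain \<K> where \<K>: "\<And>S. S \<in> \<S> \<Longrightarrow> countable (\<K> S)"
    "\<And>S K. S \<in> \<S> \<Longrightarrow> K \<in> \<K> S \<Longrightarrow> compact K \<and> K \<subseteq> L" "\<And>S. S \<in> \<S> \<Longrightarrow> S \<subseteq> \<Union>(\<K> S)"
    by (metis (no_types))
  have "countable (\<Union>(\<K> ` \<S>))"
    using assms(1) \<K>(1) by (intro countable_UN) auto
  moreover have "\<forall>K\<in>\<Union>(\<K> ` \<S>). compact K \<and> K \<subseteq> L"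
    using \<K>(2) by blast
  moreover have "\<Union>\<S> \<subseteq> \<Union>(\<Union>(\<K> ` \<S>))"
    using \<K>(3) by blast
  ultimately show ?thesis
    unfolding covered_by_sigma_compact_def by blast
qed

lemma sigma_compact_space_top_of_set_if_covered:
  assumes "covered_by_sigma_compact L L"
  shows "sigma_compact_space (top_of_set L)"
proof -
  obtain \<K> where \<K>: "countable \<K>" "\<forall>K\<in>\<K>. compact K \<and> K \<subseteq> L" "L \<subseteq> \<Union>\<K>"
    using assms unfolding covered_by_sigma_compact_def by (elim exE conjE) (rule that)
  define K where "K = from_nat_into (insert {} \<K>)"
  have range_K: "range K = insert {} \<K>"
    unfolding K_def using \<K>(1) by (simp add: range_from_nat_into)
  have "K n \<in> insert {} \<K>" for n
    unfolding range_K[symmetric] by (rule rangeI)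
  then have "compactin (top_of_set L) (K n)" for n
    using \<K>(2) by (cases "K n = {}") (auto simp: compactin_subtopology)
  moreover have "(\<Union>n. K n) = L"
  proof
    show "(\<Union>n. K n) \<subseteq> L"
      using \<open>\<And>n. K n \<in> insert {} \<K>\<close> \<K>(2) by blast
    show "L \<subseteq> (\<Union>n. K n)"
      using \<K>(3) unfolding range_K by simp
  qed
  ultimately show ?thesis
    unfolding sigma_compact_space_def by (intro exI[of _ K]) simp
qed

text \<open>The set \<open>W\<close> is the union of all open sets whose trace on \<open>P\<close> has a \<sigma>-compactly covered
  image; by Lindelof's theorem it is a countable such union, hence has this property itself.\<close>

lemma sigma_compact_covered_kernel:
  fixes g :: "'b::second_countable_topology \<Rightarrow> 'a::topological_space"
  obtains W where "open W" "covered_by_sigma_compact L (g ` (W \<inter> P))"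
    "\<And>U K. open U \<Longrightarrow> U \<inter> (P - W) \<noteq> {} \<Longrightarrow> compact K \<Longrightarrow> K \<subseteq> L \<Longrightarrow> \<not> g ` (U \<inter> (P - W)) \<subseteq> K"
proof -
  define \<W> where "\<W> = {U. open U \<and> covered_by_sigma_compact L (g ` (U \<inter> P))}"
  obtain \<W>' where \<W>': "\<W>' \<subseteq> \<W>" "countable \<W>'" "\<Union>\<W>' = \<Union>\<W>"
  proof (rule Lindelof_openin[of \<W> UNIV])
    show "openin (top_of_set UNIV) U" if "U \<in> \<W>" for U
      using that unfolding \<W>_def by simp
  qed
  have "g ` (\<Union>\<W> \<inter> P) = \<Union>((\<lambda>U. g ` (U \<inter> P)) ` \<W>')"
    unfolding \<W>'(3)[symmetric] by blast
  moreover have "covered_by_sigma_compact L (\<Union>((\<lambda>U. g ` (U \<inter> P)) ` \<W>'))"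
  proof (rule covered_by_sigma_compact_countable_Union)
    show "countable ((\<lambda>U. g ` (U \<inter> P)) ` \<W>')"
      using \<W>'(2) by (rule countable_image)
    show "covered_by_sigma_compact L S" if "S \<in> (\<lambda>U. g ` (U \<inter> P)) ` \<W>'" for S
      using that \<W>'(1) unfolding \<W>_def by blast
  qed
  ultimately have covered: "covered_by_sigma_compact L (g ` (\<Union>\<W> \<inter> P))"
    by simp
  show thesis
  proof (rule that[of "\<Union>\<W>"])
    show "open (\<Union>\<W>)"
      unfolding \<W>_def by (rule open_Union) simp
    show "covered_by_sigma_compact L (g ` (\<Union>\<W> \<inter> P))"
      by (fact covered)
    fix U K
    assume U: "open U" "U \<inter> (P - \<Union>\<W>) \<noteq> {}" and K: "compact K" "K \<subseteq> L"
    show "\<not> g ` (U \<inter> (P - \<Union>\<W>)) \<subseteq> K"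
    proof
      assume image_in_K: "g ` (U \<inter> (P - \<Union>\<W>)) \<subseteq> K"
      have "g ` (U \<inter> P) \<subseteq> g ` (U \<inter> (P - \<Union>\<W>)) \<union> g ` (\<Union>\<W> \<inter> P)"
        unfolding image_Un[symmetric] by (rule image_mono) blast
      also have "\<dots> \<subseteq> K \<union> g ` (\<Union>\<W> \<inter> P)"
        using image_in_K by (rule Un_mono) (rule order_refl)
      finally have "g ` (U \<inter> P) \<subseteq> \<Union>{K, g ` (\<Union>\<W> \<inter> P)}"
        by simp
      moreover have "covered_by_sigma_compact L (\<Union>{K, g ` (\<Union>\<W> \<inter> P)})"
        using covered covered_by_sigma_compact_compact[OF K]
        by (intro covered_by_sigma_compact_countable_Union) auto
      ultimately have "U \<in> \<W>"
        unfolding \<W>_def using U(1) covered_by_sigma_compact_subset by blast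
      with U(2) show False
        by blast
    qed
  qed
qed

section \<open>Discrete sequences and separating balls in metric spaces\<close>

lemma closedin_Union_locally_finite_closed:
  fixes D :: "'i \<Rightarrow> 'a::metric_space set"
  assumes "\<And>i. i \<in> I \<Longrightarrow> closed (D i)"
    and "\<And>y. y \<in> L \<Longrightarrow> \<exists>e>0. finite {i \<in> I. D i \<inter> ball y e \<noteq> {}}"
  shows "closedin (top_of_set L) (L \<inter> \<Union>(D ` I))"
proof -
  have "locally_finite_in (top_of_set L) ((\<lambda>i. L \<inter> D i) ` I)"
    unfolding locally_finite_in_def
  proof (intro conjI ballI)
    show "\<Union>((\<lambda>i. L \<inter> D i) ` I) \<subseteq> topspace (top_of_set L)"
      by auto
    fix y assume "y \<in> topspace (top_of_set L)"
    then have "y \<in> L"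
      by simp
    then obtain e where "e > 0" and fin: "finite {i \<in> I. D i \<inter> ball y e \<noteq> {}}"
      using assms(2) by blast
    have "{U \<in> (\<lambda>i. L \<inter> D i) ` I. U \<inter> (L \<inter> ball y e) \<noteq> {}}
        \<subseteq> (\<lambda>i. L \<inter> D i) ` {i \<in> I. D i \<inter> ball y e \<noteq> {}}"
      by blast
    then have "finite {U \<in> (\<lambda>i. L \<inter> D i) ` I. U \<inter> (L \<inter> ball y e) \<noteq> {}}"
      by (rule finite_surj[OF fin])
    moreover have "openin (top_of_set L) (L \<inter> ball y e)"
      by (simp add: openin_open_Int)
    moreover have "y \<in> L \<inter> ball y e"
      using \<open>e > 0\<close> \<open>y \<in> L\<close> by simp
    ultimately show "\<exists>V. openin (top_of_set L) V \<and> y \<in> V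
        \<and> finite {U \<in> (\<lambda>i. L \<inter> D i) ` I. U \<inter> V \<noteq> {}}"
      by blast
  qed
  moreover have "closedin (top_of_set L) (L \<inter> D i)" if "i \<in> I" for i
    using assms(1)[OF that] by (simp add: closedin_closed_Int)
  ultimately have "closedin (top_of_set L) (\<Union>((\<lambda>i. L \<inter> D i) ` I))"
    by (intro closedin_locally_finite_Union) blast+
  moreover have "\<Union>((\<lambda>i. L \<inter> D i) ` I) = L \<inter> \<Union>(D ` I)"
    by blast
  ultimately show ?thesis
    by simp
qed

lemma cball_subset_ball_less: "r < s \<Longrightarrow> cball x r \<subseteq> ball x s"
  by auto

lemma islimpt_range_of_approximating_sequence:
  fixes t c :: "nat \<Rightarrow> 'a::metric_space"
  assumes "inj t" and close: "\<And>k. dist (c k) (t k) < 1 / Suc k"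
    and frequent: "\<And>e. e > 0 \<Longrightarrow> infinite {k. c k \<in> ball y e}"
  shows "y islimpt range t"
  unfolding islimpt_approachable
proof (intro allI impI)
  fix e :: real
  assume "e > 0"
  then obtain N :: nat where N: "1 / Suc N < e / 2"
    by (metis half_gt_zero_iff nat_approx_posE of_nat_Suc)
  have "finite (t -` {y})"
    using \<open>inj t\<close> by (simp add: finite_vimageI)
  then have "finite ({..N} \<union> t -` {y})"
    by simp
  then have "infinite ({k. c k \<in> ball y (e / 2)} - ({..N} \<union> t -` {y}))"
    using frequent[of "e / 2"] \<open>e > 0\<close> by (simp add: Diff_infinite_finite)
  then obtain k where "k \<in> {k. c k \<in> ball y (e / 2)} - ({..N} \<union> t -` {y})"
    using infinite_imp_nonempty by blast
  then have k: "c k \<in> ball y (e / 2)" "N < k" "t k \<noteq> y"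
    by auto
  have "1 / Suc k \<le> 1 / Suc N"
    using k(2) by (simp add: frac_le)
  then have "dist (t k) y < e"
    using close[of k] k(1) N dist_triangle[of "t k" y "c k"] by (simp add: dist_commute)
  with k(3) show "\<exists>x'\<in>range t. x' \<noteq> y \<and> dist x' y < e"
    by blast
qed

lemma locally_finite_sequence_in_noncompact:
  fixes A L :: "'a::metric_space set"
  assumes "A \<subseteq> L" and not_compact: "\<And>K. compact K \<Longrightarrow> K \<subseteq> L \<Longrightarrow> \<not> A \<subseteq> K"
  obtains c :: "nat \<Rightarrow> 'a" where "range c \<subseteq> A" "\<And>y. y \<in> L \<Longrightarrow> \<exists>e>0. finite {k. c k \<in> ball y e}"
proof -
  have "\<not> compact (L \<inter> closure A)"
    using not_compact[of "L \<inter> closure A"] assms(1) closure_subset by blast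
  then obtain T where T: "infinite T" "T \<subseteq> L \<inter> closure A" "\<And>x. x \<in> L \<inter> closure A \<Longrightarrow> \<not> x islimpt T"
    unfolding compact_eq_Bolzano_Weierstrass by blast
  obtain t :: "nat \<Rightarrow> 'a" where t: "inj t" "range t \<subseteq> T"
    using infinite_countable_subset[OF T(1)] by blast
  have "\<forall>k. \<exists>a\<in>A. dist a (t k) < 1 / Suc k"
  proof
    fix k
    have "t k \<in> closure A"
      using t(2) T(2) by blast
    then show "\<exists>a\<in>A. dist a (t k) < 1 / Suc k"
      unfolding closure_approachable by simp
  qed
  then obtain c where c: "\<And>k. c k \<in> A" "\<And>k. dist (c k) (t k) < 1 / Suc k"
    by metis
  show thesis
  proof (rule that)
    show "range c \<subseteq> A"
      using c(1) by auto
    show "\<exists>e>0. finite {k. c k \<in> ball y e}" if "y \<in> L" for y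
    proof (rule ccontr)
      assume "\<not> (\<exists>e>0. finite {k. c k \<in> ball y e})"
      then have "y islimpt range t"
        using islimpt_range_of_approximating_sequence[OF t(1) c(2)] by blast
      then have "y islimpt T"
        using t(2) islimpt_subset by blast
      moreover have "T \<subseteq> closure A"
        using T(2) by blast
      ultimately have "y \<in> closure A"
        using closed_limpt islimpt_subset by blast
      with \<open>y islimpt T\<close> T(3) \<open>y \<in> L\<close> show False
        by blast
    qed
  qed
qed

lemma inj_sequence_without_limpt:
  fixes A L :: "'a::metric_space set"
  assumes "A \<subseteq> L" and not_compact: "\<And>K. compact K \<Longrightarrow> K \<subseteq> L \<Longrightarrow> \<not> A \<subseteq> K"
  obtains c :: "nat \<Rightarrow> 'a" where "inj c" "range c \<subseteq> A" "\<And>y. y \<in> L \<Longrightarrow> \<not> y islimpt range c"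
proof -
  obtain c' :: "nat \<Rightarrow> 'a" where c': "range c' \<subseteq> A"
    and rarely: "\<And>y. y \<in> L \<Longrightarrow> \<exists>e>0. finite {k. c' k \<in> ball y e}"
    using locally_finite_sequence_in_noncompact[OF assms] by blast
  have "infinite (range c')"
  proof
    assume "finite (range c')"
    then obtain a where "a \<in> range c'" "infinite (c' -` {a})"
      using inf_img_fin_domE[of c' UNIV] by auto
    then have "a \<in> L"
      using c' assms(1) by blast
    then obtain e where "e > 0" "finite {k. c' k \<in> ball a e}"
      using rarely by blast
    moreover have "c' -` {a} \<subseteq> {k. c' k \<in> ball a e}"
      using \<open>e > 0\<close> by auto
    ultimately show False
      using \<open>infinite (c' -` {a})\<close> finite_subset by blast
  qed
  then obtain c :: "nat \<Rightarrow> 'a" where c: "inj c" "range c \<subseteq> range c'"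
    using infinite_countable_subset by blast
  show thesis
  proof (rule that[OF c(1)])
    show "range c \<subseteq> A"
      using c(2) c' by (rule order_trans)
    fix y
    assume "y \<in> L"
    then obtain e where "e > 0" "finite {k. c' k \<in> ball y e}"
      using rarely by blast
    moreover have "range c' \<inter> ball y e = c' ` {k. c' k \<in> ball y e}"
      by auto
    ultimately have "finite (range c' \<inter> ball y e)"
      by simp
    then show "\<not> y islimpt range c"
      using \<open>e > 0\<close> islimpt_subset[OF _ c(2)] unfolding islimpt_eq_infinite_ball by blast
  qed
qed

lemma finite_cballs_meeting_ball:
  fixes c :: "nat \<Rightarrow> 'a::metric_space"
  assumes "inj c" "e > 0" "\<And>k. c k \<noteq> y \<Longrightarrow> e \<le> dist (c k) y" "\<And>k. r k \<le> 1 / Suc k"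
  shows "finite {k. cball (c k) (r k) \<inter> ball y (e / 2) \<noteq> {}}"
proof -
  have "{k. cball (c k) (r k) \<inter> ball y (e / 2) \<noteq> {}} \<subseteq> c -` {y} \<union> {..nat \<lceil>2 / e\<rceil>}"
  proof
    fix k
    assume "k \<in> {k. cball (c k) (r k) \<inter> ball y (e / 2) \<noteq> {}}"
    then obtain z where z: "dist (c k) z \<le> r k" "dist y z < e / 2"
      by auto
    show "k \<in> c -` {y} \<union> {..nat \<lceil>2 / e\<rceil>}"
    proof (cases "c k = y")
      case False
      then have "e \<le> dist (c k) y"
        using assms(3) by simp
      also have "\<dots> \<le> dist (c k) z + dist y z"
        using dist_triangle[of "c k" y z] by (simp add: dist_commute)
      finally have "e / 2 < r k"
        using z by linarith
      also have "r k \<le> 1 / Suc k"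
        by (rule assms(4))
      finally have "real (Suc k) < 2 / e"
        using \<open>e > 0\<close> by (simp add: field_simps)
      then show ?thesis
        by simp linarith
    qed simp
  qed
  moreover have "finite (c -` {y})"
    using \<open>inj c\<close> by (simp add: finite_vimageI)
  ultimately show ?thesis
    by (meson finite_Un finite_atMost finite_subset)
qed

lemma separating_radii:
  fixes c :: "nat \<Rightarrow> 'a::metric_space"
  assumes "inj c" "range c \<subseteq> L" and no_limpt: "\<And>y. y \<in> L \<Longrightarrow> \<not> y islimpt range c"
    and "open V" "range c \<subseteq> V"
  obtains r where "\<And>k. r k > 0" "\<And>k. ball (c k) (2 * r k) \<subseteq> V"
    "\<And>k j. k \<noteq> j \<Longrightarrow> ball (c k) (2 * r k) \<inter> ball (c j) (2 * r j) = {}"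
    "\<And>y. y \<in> L \<Longrightarrow> \<exists>e>0. finite {k. cball (c k) (r k) \<inter> ball y e \<noteq> {}}"
proof -
  have separated: "\<exists>e>0. \<forall>x\<in>range c. x \<noteq> y \<longrightarrow> e \<le> dist x y" if "y \<in> L" for y
    using no_limpt[OF that] unfolding islimpt_approachable by (meson not_less)
  have "\<forall>k. \<exists>e>0. \<forall>x\<in>range c. x \<noteq> c k \<longrightarrow> e \<le> dist x (c k)"
    using separated assms(2) by blast
  then obtain \<rho> where \<rho>: "\<And>k. \<rho> k > 0" "\<And>k x. x \<in> range c \<Longrightarrow> x \<noteq> c k \<Longrightarrow> \<rho> k \<le> dist x (c k)"
    by metis
  have "\<forall>k. \<exists>e>0. ball (c k) e \<subseteq> V"
    using assms(4,5) open_contains_ball by blast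
  then obtain \<epsilon> where \<epsilon>: "\<And>k. \<epsilon> k > 0" "\<And>k. ball (c k) (\<epsilon> k) \<subseteq> V"
    by metis
  define r where "r k = min (min (\<rho> k / 4) (\<epsilon> k / 2)) (1 / Suc k)" for k
  show thesis
  proof (rule that)
    show "r k > 0" for k
      using \<rho>(1)[of k] \<epsilon>(1)[of k] unfolding r_def by simp
    show "ball (c k) (2 * r k) \<subseteq> V" for k
    proof -
      have "ball (c k) (2 * r k) \<subseteq> ball (c k) (\<epsilon> k)"
        unfolding r_def by (intro subset_ball) linarith
      then show ?thesis
        using \<epsilon>(2)[of k] by blast
    qed
    show "ball (c k) (2 * r k) \<inter> ball (c j) (2 * r j) = {}" if "k \<noteq> j" for k j
    proof (rule ccontr)
      assume "ball (c k) (2 * r k) \<inter> ball (c j) (2 * r j) \<noteq> {}"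
      then obtain z where z: "dist (c k) z < 2 * r k" "dist (c j) z < 2 * r j"
        by auto
      have "c j \<noteq> c k"
        using \<open>inj c\<close> \<open>k \<noteq> j\<close> by (metis injD)
      then have "\<rho> k \<le> dist (c j) (c k)" "\<rho> j \<le> dist (c k) (c j)"
        using \<rho>(2) by auto
      moreover have "r k \<le> \<rho> k / 4" "r j \<le> \<rho> j / 4"
        unfolding r_def by auto
      moreover have "dist (c k) (c j) < 2 * r k + 2 * r j"
        using z dist_triangle[of "c k" "c j" z] by (simp add: dist_commute)
      ultimately show False
        by (simp add: dist_commute)
    qed
    show "\<exists>e>0. finite {k. cball (c k) (r k) \<inter> ball y e \<noteq> {}}" if y: "y \<in> L" for y
    proof -
      obtain e where e: "e > 0" "\<And>x. x \<in> range c \<Longrightarrow> x \<noteq> y \<Longrightarrow> e \<le> dist x y"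
        using separated[OF y] by blast
      have "finite {k. cball (c k) (r k) \<inter> ball y (e / 2) \<noteq> {}}"
      proof (rule finite_cballs_meeting_ball[OF \<open>inj c\<close> e(1)])
        show "e \<le> dist (c k) y" if "c k \<noteq> y" for k
          using e(2) that by blast
        show "r k \<le> 1 / Suc k" for k
          unfolding r_def by simp
      qed
      with e(1) show ?thesis
        by (intro exI[of _ "e / 2"]) simp
    qed
  qed
qed

lemma preimage_radii:
  fixes g :: "real \<Rightarrow> 'a::metric_space"
  assumes "continuous_on (-\<rat>) g" "open U" "\<And>k. x k \<in> U - \<rat>" "\<And>k. r k > 0" "q \<in> \<rat>" "d > 0"
  obtains \<eta> where "\<And>k. 0 < \<eta> k" "\<And>k. \<eta> k \<le> d" "\<And>k. cball (x k) (\<eta> k) \<subseteq> U"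
    "\<And>k. q \<notin> cball (x k) (\<eta> k)" "\<And>k. g ` (cball (x k) (\<eta> k) \<inter> -\<rat>) \<subseteq> ball (g (x k)) (r k)"
proof -
  have x_irrational: "x k \<in> -\<rat>" for k
    using assms(3) by blast
  have "\<forall>k. \<exists>\<delta>>0. \<forall>z\<in>-\<rat>. dist z (x k) < \<delta> \<longrightarrow> dist (g z) (g (x k)) < r k"
    using assms(1,4) x_irrational unfolding continuous_on_iff by blast
  then obtain \<delta> where \<delta>: "\<And>k. \<delta> k > 0"
    "\<And>k z. z \<in> -\<rat> \<Longrightarrow> dist z (x k) < \<delta> k \<Longrightarrow> dist (g z) (g (x k)) < r k"
    by metis
  have "\<forall>k. \<exists>e>0. ball (x k) e \<subseteq> U"
    using assms(2,3) open_contains_ball by blast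
  then obtain \<epsilon> where \<epsilon>: "\<And>k. \<epsilon> k > 0" "\<And>k. ball (x k) (\<epsilon> k) \<subseteq> U"
    by metis
  have x_not_q: "0 < dist (x k) q" for k
    using assms(3,5) by auto
  define \<eta> where "\<eta> k = min (min (\<delta> k / 2) (\<epsilon> k / 2)) (min d (dist (x k) q / 2))" for k
  have \<eta>: "0 < \<eta> k" "\<eta> k < \<delta> k" "\<eta> k < \<epsilon> k" "\<eta> k \<le> d" "\<eta> k \<le> dist (x k) q / 2" for k
    using \<delta>(1)[of k] \<epsilon>(1)[of k] x_not_q[of k] \<open>d > 0\<close> unfolding \<eta>_def by auto
  show thesis
  proof (rule that)
    show "0 < \<eta> k" "\<eta> k \<le> d" for k
      using \<eta> by auto
    show "cball (x k) (\<eta> k) \<subseteq> U" for k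
      using cball_subset_ball_less[OF \<eta>(3)] \<epsilon>(2) by blast
    show "q \<notin> cball (x k) (\<eta> k)" for k
      unfolding mem_cball using \<eta>(5)[of k] x_not_q[of k] by linarith
    show "g ` (cball (x k) (\<eta> k) \<inter> -\<rat>) \<subseteq> ball (g (x k)) (r k)" for k
    proof
      fix w
      assume "w \<in> g ` (cball (x k) (\<eta> k) \<inter> -\<rat>)"
      then obtain z where z: "dist (x k) z \<le> \<eta> k" "z \<in> -\<rat>" "w = g z"
        by auto
      then have "dist (g z) (g (x k)) < r k"
        using \<delta>(2)[OF z(2)] \<eta>(2)[of k] by (simp add: dist_commute)
      with z(3) show "w \<in> ball (g (x k)) (r k)"
        by (simp add: dist_commute)
    qed
  qed
qed

lemma locally_finite_tree_levels:
  fixes D :: "nat list \<Rightarrow> 'a::metric_space set"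
  assumes nested: "\<And>k s. D (k # s) \<subseteq> D s"
    and children: "\<And>s. \<exists>e>0. finite {k. D (k # s) \<inter> ball y e \<noteq> {}}"
  shows "\<exists>e>0. finite {s. length s = n \<and> D s \<inter> ball y e \<noteq> {}}"
proof (induction n)
  case 0
  have "{s. length s = 0 \<and> D s \<inter> ball y 1 \<noteq> {}} \<subseteq> {[]}"
    by auto
  then show ?case
    using finite_subset by (intro exI[of _ 1]) auto
next
  case (Suc n)
  then obtain e0 where "e0 > 0" and fin0: "finite {s. length s = n \<and> D s \<inter> ball y e0 \<noteq> {}}"
    by blast
  define S where "S = {s. length s = n \<and> D s \<inter> ball y e0 \<noteq> {}}"
  obtain es where es: "\<And>s. es s > 0" "\<And>s. finite {k. D (k # s) \<inter> ball y (es s) \<noteq> {}}"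
    using children by metis
  define e where "e = Min (insert e0 (es ` S))"
  have "finite S"
    using fin0 unfolding S_def .
  then have "e > 0" "e \<le> e0" "\<And>s. s \<in> S \<Longrightarrow> e \<le> es s"
    unfolding e_def using \<open>e0 > 0\<close> es(1) by auto
  have "{s. length s = Suc n \<and> D s \<inter> ball y e \<noteq> {}}
      \<subseteq> (\<Union>s\<in>S. (\<lambda>k. k # s) ` {k. D (k # s) \<inter> ball y (es s) \<noteq> {}})"
  proof
    fix s' assume "s' \<in> {s. length s = Suc n \<and> D s \<inter> ball y e \<noteq> {}}"
    then obtain k s where s': "s' = k # s" "length s = n" "D (k # s) \<inter> ball y e \<noteq> {}"
      by (cases s') auto
    have "D s \<inter> ball y e0 \<noteq> {}"
      using s'(3) nested[of k s] subset_ball[OF \<open>e \<le> e0\<close>] by blast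
    then have "s \<in> S"
      unfolding S_def using s'(2) by simp
    then have "D (k # s) \<inter> ball y (es s) \<noteq> {}"
      using s'(3) subset_ball[of e "es s" y] \<open>\<And>s. s \<in> S \<Longrightarrow> e \<le> es s\<close> by blast
    with \<open>s \<in> S\<close> s'(1) show "s' \<in> (\<Union>s\<in>S. (\<lambda>k. k # s) ` {k. D (k # s) \<inter> ball y (es s) \<noteq> {}})"
      by blast
  qed
  moreover have "finite (\<Union>s\<in>S. (\<lambda>k. k # s) ` {k. D (k # s) \<inter> ball y (es s) \<noteq> {}})"
    using \<open>finite S\<close> es(2) by simp
  ultimately show ?case
    using \<open>e > 0\<close> finite_subset by blast
qed

definition branch :: "(nat \<Rightarrow> 'b list) \<Rightarrow> bool" where
  "branch p \<longleftrightarrow> p 0 = [] \<and> (\<forall>n. \<exists>k. p (Suc n) = k # p n)"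

lemma length_branch: "branch p \<Longrightarrow> length (p n) = n"
proof (induction n)
  case (Suc n)
  then obtain k where "p (Suc n) = k # p n"
    unfolding branch_def by blast
  with Suc show ?case
    by simp
qed (simp add: branch_def)

section \<open>The Hurewicz tree\<close>

definition rat_enum :: "nat \<Rightarrow> real" where
  "rat_enum = of_rat \<circ> nat_to_rat_surj"

lemma range_rat_enum: "range rat_enum = \<rat>"
  unfolding rat_enum_def by (rule Rats_eq_range_of_rat_o_nat_to_rat_surj[symmetric])

locale hurewicz_tree =
  fixes g :: "real \<Rightarrow> 'a::metric_space" and L :: "'a set" and F :: "real set"
  assumes continuous: "continuous_on (-\<rat>) g"
    and image_subset: "g ` (-\<rat>) \<subseteq> L"
    and irrational: "F \<subseteq> -\<rat>"
    and nonempty: "F \<noteq> {}"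
    and nowhere_compact: "\<And>U K. open U \<Longrightarrow> U \<inter> F \<noteq> {} \<Longrightarrow> compact K \<Longrightarrow> K \<subseteq> L \<Longrightarrow> \<not> g ` (U \<inter> F) \<subseteq> K"
begin

text \<open>The clauses of a splitting serve the following purposes: radii below \<open>1 / Suc n\<close> make every
  branch of the tree shrink to a point, avoiding the \<open>n\<close>-th rational makes that point irrational,
  and local finiteness in \<open>L\<close> makes the union of the image cells of a level closed in \<open>L\<close>.\<close>

definition splitting ::
  "nat \<Rightarrow> real set \<Rightarrow> 'a set \<Rightarrow> (nat \<Rightarrow> real) \<Rightarrow> (nat \<Rightarrow> real) \<Rightarrow> (nat \<Rightarrow> 'a) \<Rightarrow> (nat \<Rightarrow> real) \<Rightarrow> bool"
where
  "splitting n U V x \<eta> c r \<longleftrightarrow>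
     (\<forall>k. x k \<in> F \<and> 0 < \<eta> k \<and> \<eta> k \<le> 1 / Suc n \<and> cball (x k) (\<eta> k) \<subseteq> U
        \<and> rat_enum n \<notin> cball (x k) (\<eta> k) \<and> g ` (cball (x k) (\<eta> k) \<inter> -\<rat>) \<subseteq> ball (c k) (r k)
        \<and> c k \<in> L \<and> 0 < r k \<and> ball (c k) (2 * r k) \<subseteq> V)
   \<and> (\<forall>k j. k \<noteq> j \<longrightarrow> ball (c k) (2 * r k) \<inter> ball (c j) (2 * r j) = {})
   \<and> (\<forall>y\<in>L. \<exists>e>0. finite {k. cball (c k) (r k) \<inter> ball y e \<noteq> {}})"

lemma splitting_exists:
  assumes "open U" "U \<inter> F \<noteq> {}" "open V" "g ` (U \<inter> F) \<subseteq> V"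
  shows "\<exists>x \<eta> c r. splitting n U V x \<eta> c r"
proof -
  have "g ` (U \<inter> F) \<subseteq> L"
    using irrational image_subset by blast
  obtain c :: "nat \<Rightarrow> 'a" where c: "inj c" "range c \<subseteq> g ` (U \<inter> F)" "\<And>y. y \<in> L \<Longrightarrow> \<not> y islimpt range c"
    using inj_sequence_without_limpt[OF \<open>g ` (U \<inter> F) \<subseteq> L\<close> nowhere_compact[OF assms(1,2)]] by blast
  have "range c \<subseteq> L" "range c \<subseteq> V"
    using c(2) \<open>g ` (U \<inter> F) \<subseteq> L\<close> assms(4) by blast+
  obtain r where r: "\<And>k. r k > 0" "\<And>k. ball (c k) (2 * r k) \<subseteq> V"
    "\<And>k j. k \<noteq> j \<Longrightarrow> ball (c k) (2 * r k) \<inter> ball (c j) (2 * r j) = {}"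
    "\<And>y. y \<in> L \<Longrightarrow> \<exists>e>0. finite {k. cball (c k) (r k) \<inter> ball y e \<noteq> {}}"
    using separating_radii[OF c(1) \<open>range c \<subseteq> L\<close> c(3) assms(3) \<open>range c \<subseteq> V\<close>] by blast
  have "\<forall>k. \<exists>z. z \<in> U \<inter> F \<and> g z = c k"
    using c(2) by (metis image_iff rangeI subsetD)
  then obtain x where x: "\<And>k. x k \<in> U \<inter> F" "\<And>k. g (x k) = c k"
    by metis
  have x_irrational: "x k \<in> U - \<rat>" for k
    using x(1) irrational by blast
  have rat: "rat_enum n \<in> \<rat>"
    unfolding range_rat_enum[symmetric] by (rule rangeI)
  have radius_pos: "(0::real) < 1 / Suc n"
    by simp
  obtain \<eta> where \<eta>: "\<And>k. 0 < \<eta> k" "\<And>k. \<eta> k \<le> 1 / Suc n" "\<And>k. cball (x k) (\<eta> k) \<subseteq> U"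
    "\<And>k. rat_enum n \<notin> cball (x k) (\<eta> k)" "\<And>k. g ` (cball (x k) (\<eta> k) \<inter> -\<rat>) \<subseteq> ball (g (x k)) (r k)"
  proof (rule preimage_radii[OF continuous assms(1) x_irrational r(1) rat radius_pos])
  qed (rule that; assumption)
  have "x k \<in> F" "c k \<in> L" for k
    using x(1) \<open>range c \<subseteq> L\<close> by auto
  then have "splitting n U V x \<eta> c r"
    unfolding splitting_def using \<eta> r x(2) by (intro conjI allI impI ballI) auto
  then show ?thesis
    by blast
qed

definition split_choice ::
  "nat \<Rightarrow> real set \<Rightarrow> 'a set \<Rightarrow> (nat \<Rightarrow> real) \<times> (nat \<Rightarrow> real) \<times> (nat \<Rightarrow> 'a) \<times> (nat \<Rightarrow> real)"
where
  "split_choice n U V = (SOME (x, \<eta>, c, r). splitting n U V x \<eta> c r)"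

lemma splitting_split_choice:
  assumes "open U" "U \<inter> F \<noteq> {}" "open V" "g ` (U \<inter> F) \<subseteq> V"
  shows "case split_choice n U V of (x, \<eta>, c, r) \<Rightarrow> splitting n U V x \<eta> c r"
proof -
  have "\<exists>t. case t of (x, \<eta>, c, r) \<Rightarrow> splitting n U V x \<eta> c r"
    using splitting_exists[OF assms] by (simp add: split_paired_Ex)
  then show ?thesis
    unfolding split_choice_def by (rule someI_ex)
qed

primrec node :: "nat list \<Rightarrow> real set \<times> 'a set" where
  "node [] = (UNIV, UNIV)"
| "node (k # s) = (case split_choice (length s) (fst (node s)) (snd (node s)) of
      (x, \<eta>, c, r) \<Rightarrow> (ball (x k) (\<eta> k), ball (c k) (r k)))"

definition node_split :: "nat list \<Rightarrow> (nat \<Rightarrow> real) \<times> (nat \<Rightarrow> real) \<times> (nat \<Rightarrow> 'a) \<times> (nat \<Rightarrow> real)" where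
  "node_split s = split_choice (length s) (fst (node s)) (snd (node s))"

definition point :: "nat list \<Rightarrow> nat \<Rightarrow> real" where
  "point s = fst (node_split s)"

definition radius :: "nat list \<Rightarrow> nat \<Rightarrow> real" where
  "radius s = fst (snd (node_split s))"

definition image_point :: "nat list \<Rightarrow> nat \<Rightarrow> 'a" where
  "image_point s = fst (snd (snd (node_split s)))"

definition image_radius :: "nat list \<Rightarrow> nat \<Rightarrow> real" where
  "image_radius s = snd (snd (snd (node_split s)))"

lemma node_Cons [simp]:
  "node (k # s) = (ball (point s k) (radius s k), ball (image_point s k) (image_radius s k))"
  by (simp add: point_def radius_def image_point_def image_radius_def node_split_def split: prod.split)

declare node.simps(2) [simp del]

lemma node_admissible:
  "open (fst (node s)) \<and> fst (node s) \<inter> F \<noteq> {} \<and> open (snd (node s))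
    \<and> g ` (fst (node s) \<inter> F) \<subseteq> snd (node s)"
proof (induction s)
  case Nil
  then show ?case
    using nonempty by simp
next
  case (Cons k s)
  then have "splitting (length s) (fst (node s)) (snd (node s))
      (point s) (radius s) (image_point s) (image_radius s)"
    using splitting_split_choice[of "fst (node s)" "snd (node s)" "length s"]
    by (simp add: point_def radius_def image_point_def image_radius_def node_split_def split: prod.splits)
  then have "point s k \<in> F" "0 < radius s k"
    and image_cell: "g ` (cball (point s k) (radius s k) \<inter> -\<rat>) \<subseteq> ball (image_point s k) (image_radius s k)"
    unfolding splitting_def by blast+
  then have "ball (point s k) (radius s k) \<inter> F \<noteq> {}"
    by (metis centre_in_ball disjoint_iff)
  moreover have "ball (point s k) (radius s k) \<inter> F \<subseteq> cball (point s k) (radius s k) \<inter> -\<rat>"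
    using irrational by auto
  then have "g ` (ball (point s k) (radius s k) \<inter> F) \<subseteq> ball (image_point s k) (image_radius s k)"
    using image_cell by (meson image_mono order_trans)
  ultimately show ?case
    by simp
qed

lemma splitting_node:
  "splitting (length s) (fst (node s)) (snd (node s))
     (point s) (radius s) (image_point s) (image_radius s)"
  using splitting_split_choice[of "fst (node s)" "snd (node s)" "length s"] node_admissible[of s]
  by (simp add: point_def radius_def image_point_def image_radius_def node_split_def split: prod.splits)

lemma splitting_nodeD:
  "point s k \<in> F" "0 < radius s k" "radius s k \<le> 1 / Suc (length s)"
  "cball (point s k) (radius s k) \<subseteq> fst (node s)"
  "rat_enum (length s) \<notin> cball (point s k) (radius s k)"
  "g ` (cball (point s k) (radius s k) \<inter> -\<rat>) \<subseteq> ball (image_point s k) (image_radius s k)"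
  "image_point s k \<in> L" "0 < image_radius s k"
  "ball (image_point s k) (2 * image_radius s k) \<subseteq> snd (node s)"
  "k \<noteq> j \<Longrightarrow> ball (image_point s k) (2 * image_radius s k) \<inter> ball (image_point s j) (2 * image_radius s j) = {}"
  "y \<in> L \<Longrightarrow> \<exists>e>0. finite {k. cball (image_point s k) (image_radius s k) \<inter> ball y e \<noteq> {}}"
  using splitting_node[of s] unfolding splitting_def by simp_all

fun cell :: "nat list \<Rightarrow> real set" where
  "cell [] = UNIV"
| "cell (k # s) = cball (point s k) (radius s k)"

fun image_cell :: "nat list \<Rightarrow> 'a set" where
  "image_cell [] = UNIV"
| "image_cell (k # s) = cball (image_point s k) (image_radius s k)"

fun image_halo :: "nat list \<Rightarrow> 'a set" where
  "image_halo [] = UNIV"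
| "image_halo (k # s) = ball (image_point s k) (2 * image_radius s k)"

lemma closed_cell: "closed (cell s)"
  by (cases s) auto

lemma closed_image_cell: "closed (image_cell s)"
  by (cases s) auto

lemma open_image_halo: "open (image_halo s)"
  by (cases s) auto

lemma cell_nonempty: "cell s \<noteq> {}"
proof (cases s)
  case (Cons k t)
  then show ?thesis
    using splitting_nodeD(2)[of t k] by auto
qed simp

lemma cell_Cons_subset: "cell (k # s) \<subseteq> cell s"
proof -
  have "fst (node s) \<subseteq> cell s"
    by (cases s) (auto simp: node_Cons)
  then show ?thesis
    using splitting_nodeD(4) by auto
qed

lemma image_cell_subset_image_halo: "image_cell s \<subseteq> image_halo s"
  using splitting_nodeD(8) by (cases s) (auto intro!: cball_subset_ball_less)

lemma image_halo_Cons_subset: "image_halo (k # s) \<subseteq> image_cell s"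
proof -
  have "snd (node s) \<subseteq> image_cell s"
    by (cases s) (auto simp: node_Cons)
  then show ?thesis
    using splitting_nodeD(9) by auto
qed

lemma image_cell_Cons_subset: "image_cell (k # s) \<subseteq> image_cell s"
  using image_cell_subset_image_halo image_halo_Cons_subset by blast

lemma image_halo_Cons_subset_halo: "image_halo (k # s) \<subseteq> image_halo s"
  using image_cell_subset_image_halo image_halo_Cons_subset by blast

lemma image_cell_image: "g ` (cell s \<inter> -\<rat>) \<subseteq> image_cell s"
  using splitting_nodeD(6) by (cases s) fastforce+

lemma image_point_in_image_halo: "image_point s k \<in> L \<inter> image_halo (k # s)"
  using splitting_nodeD(7,8) by simp

lemma rat_enum_notin_cell: "rat_enum (length s) \<notin> cell (k # s)"
  using splitting_nodeD(5) by simp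

lemma dist_le_in_cell:
  assumes "z \<in> cell (k # s)" "w \<in> cell (k # s)"
  shows "dist z w \<le> 2 / Suc (length s)"
proof -
  have "dist z w \<le> dist (point s k) z + dist (point s k) w"
    by (rule dist_triangle3)
  also have "\<dots> \<le> 2 * radius s k"
    using assms by simp
  also have "\<dots> \<le> 2 / Suc (length s)"
    using splitting_nodeD(3)[of s k] by simp
  finally show ?thesis .
qed

lemma image_halos_disjoint:
  "length s = length s' \<Longrightarrow> s \<noteq> s' \<Longrightarrow> image_halo s \<inter> image_halo s' = {}"
proof (induction s arbitrary: s')
  case Nil
  then show ?case
    by simp
next
  case (Cons k s)
  then obtain k' t where s': "s' = k' # t" "length t = length s"
    by (cases s') auto
  show ?case
  proof (cases "s = t")
    case True
    then have "k \<noteq> k'"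
      using Cons.prems(2) s'(1) by simp
    then show ?thesis
      using splitting_nodeD(10) True s'(1) by simp
  next
    case False
    then have "image_halo s \<inter> image_halo t = {}"
      using Cons.IH s'(2) by simp
    then show ?thesis
      using image_halo_Cons_subset_halo[of k s] image_halo_Cons_subset_halo[of k' t] s'(1) by blast
  qed
qed

lemma closedin_level_image_cells:
  "closedin (top_of_set L) (L \<inter> \<Union>(image_cell ` {s. length s = n}))"
proof (rule closedin_Union_locally_finite_closed)
  show "closed (image_cell s)" for s
    by (rule closed_image_cell)
  fix y
  assume "y \<in> L"
  have "\<exists>e>0. finite {s. length s = n \<and> image_cell s \<inter> ball y e \<noteq> {}}"
  proof (rule locally_finite_tree_levels)
    show "image_cell (k # s) \<subseteq> image_cell s" for k s
      by (rule image_cell_Cons_subset)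
    show "\<exists>e>0. finite {k. image_cell (k # s) \<inter> ball y e \<noteq> {}}" for s
      using splitting_nodeD(11)[OF \<open>y \<in> L\<close>] by simp
  qed
  then show "\<exists>e>0. finite {s \<in> {s. length s = n}. image_cell s \<inter> ball y e \<noteq> {}}"
    by simp
qed

definition level_cover :: "nat \<Rightarrow> 'a set set" where
  "level_cover n = insert (L - \<Union>(image_cell ` {s. length s = Suc n}))
     ((\<lambda>s. L \<inter> image_halo s) ` {s. length s = Suc n})"

lemma open_cover_level_cover: "open_cover (top_of_set L) (level_cover n)"
  unfolding open_cover_def
proof (intro conjI ballI subsetI)
  fix U
  assume "U \<in> level_cover n"
  moreover have "openin (top_of_set L) (L - \<Union>(image_cell ` {s. length s = Suc n}))"
  proof -
    have "L - \<Union>(image_cell ` {s. length s = Suc n}) = L - L \<inter> \<Union>(image_cell ` {s. length s = Suc n})"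
      by blast
    then show ?thesis
      using openin_diff[OF openin_topspace closedin_level_image_cells[of "Suc n"]] by simp
  qed
  moreover have "openin (top_of_set L) (L \<inter> image_halo s)" for s
    using open_image_halo by (simp add: openin_open_Int)
  ultimately show "openin (top_of_set L) U"
    unfolding level_cover_def by blast
next
  fix y
  assume "y \<in> topspace (top_of_set L)"
  then show "y \<in> \<Union>(level_cover n)"
    unfolding level_cover_def using image_cell_subset_image_halo by fastforce
qed

lemma exists_child_image_halo_notin:
  assumes "finite \<V>"
  shows "\<exists>k. L \<inter> image_halo (k # s) \<notin> \<V>"
proof (rule ccontr)
  assume "\<not> (\<exists>k. L \<inter> image_halo (k # s) \<notin> \<V>)"
  then have "range (\<lambda>k. L \<inter> image_halo (k # s)) \<subseteq> \<V>"
    by blast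
  moreover have "inj (\<lambda>k. L \<inter> image_halo (k # s))"
  proof (rule injI)
    fix k j
    assume same: "L \<inter> image_halo (k # s) = L \<inter> image_halo (j # s)"
    show "k = j"
    proof (rule ccontr)
      assume "k \<noteq> j"
      then have "image_halo (k # s) \<inter> image_halo (j # s) = {}"
        using splitting_nodeD(10) by simp
      with same show False
        using image_point_in_image_halo[of s k] by blast
    qed
  qed
  ultimately show False
    using assms finite_subset range_inj_infinite by blast
qed

lemma branch_avoiding:
  assumes "\<And>n. finite (\<V> n)"
  obtains p where "branch p" "\<And>n. L \<inter> image_halo (p (Suc n)) \<notin> \<V> n"
proof
  define p where "p = rec_nat [] (\<lambda>n s. (SOME k. L \<inter> image_halo (k # s) \<notin> \<V> n) # s)"
  have p_Suc: "p (Suc n) = (SOME k. L \<inter> image_halo (k # p n) \<notin> \<V> n) # p n" for n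
    unfolding p_def by simp
  then show "branch p"
    unfolding branch_def p_def by auto
  show "L \<inter> image_halo (p (Suc n)) \<notin> \<V> n" for n
    unfolding p_Suc using someI_ex[OF exists_child_image_halo_notin[OF assms]] .
qed

lemma irrational_point_on_branch:
  assumes "branch p"
  obtains a where "a \<notin> \<rat>" "\<And>n. a \<in> cell (p n)"
proof -
  have child: "\<exists>k. p (Suc n) = k # p n" for n
    using assms unfolding branch_def by blast
  have nested: "cell (p (Suc n)) \<subseteq> cell (p n)" for n
    using child[of n] cell_Cons_subset by metis
  obtain a where a: "\<And>n. a \<in> cell (p (Suc n))"
  proof (rule decreasing_closed_nest[of "\<lambda>n. cell (p (Suc n))"])
    show "closed (cell (p (Suc n)))" for n
      by (rule closed_cell)
    show "cell (p (Suc n)) \<noteq> {}" for n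
      by (rule cell_nonempty)
    show "cell (p (Suc n)) \<subseteq> cell (p (Suc m))" if "m \<le> n" for m n
      using lift_Suc_antimono_le[of "\<lambda>n. cell (p (Suc n))", OF nested that] .
    show "\<exists>n. \<forall>z\<in>cell (p (Suc n)). \<forall>w\<in>cell (p (Suc n)). dist z w < \<epsilon>" if "\<epsilon> > 0" for \<epsilon>
    proof -
      obtain n :: nat where "1 / Suc n < \<epsilon> / 2"
        using \<open>\<epsilon> > 0\<close> by (metis half_gt_zero_iff nat_approx_posE of_nat_Suc)
      then have "2 / Suc n < \<epsilon>"
        by (simp add: field_simps)
      obtain k where "p (Suc n) = k # p n"
        using child by blast
      then have "dist z w \<le> 2 / Suc n" if "z \<in> cell (p (Suc n))" "w \<in> cell (p (Suc n))" for z w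
        using dist_le_in_cell[of z k "p n" w] that length_branch[OF assms, of n] by simp
      with \<open>2 / Suc n < \<epsilon>\<close> have "\<forall>z\<in>cell (p (Suc n)). \<forall>w\<in>cell (p (Suc n)). dist z w < \<epsilon>"
        by (meson le_less_trans)
      then show ?thesis
        by blast
    qed
  qed (rule that)
  show thesis
  proof (rule that)
    show "a \<in> cell (p n)" for n
      using a[of n] nested[of n] by blast
    show "a \<notin> \<rat>"
    proof
      assume "a \<in> \<rat>"
      then obtain m where "a = rat_enum m"
        using range_rat_enum by blast
      moreover obtain k where "p (Suc m) = k # p m"
        using child by blast
      ultimately show False
        using a[of m] rat_enum_notin_cell[of "p m" k] length_branch[OF assms, of m] by simp
    qed
  qed
qed

theorem not_menger_space: "\<not> menger_space (top_of_set L)"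
proof
  assume "menger_space (top_of_set L)"
  then have "\<exists>\<V>. (\<forall>n. finite (\<V> n) \<and> \<V> n \<subseteq> level_cover n) \<and> L \<subseteq> (\<Union>n. \<Union>(\<V> n))"
    using open_cover_level_cover unfolding menger_space_def by simp
  then obtain \<V> :: "nat \<Rightarrow> 'a set set"
    where \<V>: "\<And>n. finite (\<V> n)" "\<And>n. \<V> n \<subseteq> level_cover n" "L \<subseteq> (\<Union>n. \<Union>(\<V> n))"
    by blast
  obtain p where p: "branch p" "\<And>n. L \<inter> image_halo (p (Suc n)) \<notin> \<V> n"
  proof (rule branch_avoiding[OF \<V>(1)])
  qed (rule that; assumption)
  obtain a where "a \<notin> \<rat>" "\<And>n. a \<in> cell (p n)"
  proof (rule irrational_point_on_branch[OF p(1)])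
  qed (rule that; assumption)
  then have "g a \<in> L" and in_cells: "\<And>n. g a \<in> image_cell (p n)"
    using image_subset image_cell_image by blast+
  then obtain n V where "V \<in> \<V> n" "g a \<in> V"
    using \<V>(3) by blast
  then have "V \<in> level_cover n"
    using \<V>(2) by blast
  then consider "V = L - \<Union>(image_cell ` {s. length s = Suc n})"
    | s where "length s = Suc n" "V = L \<inter> image_halo s"
    unfolding level_cover_def by blast
  then show False
  proof cases
    case 1
    then show False
      using \<open>g a \<in> V\<close> in_cells length_branch[OF p(1), of "Suc n"] by blast
  next
    case 2
    have "g a \<in> image_halo (p (Suc n))"
      using in_cells image_cell_subset_image_halo by blast
    with 2 \<open>g a \<in> V\<close> have "s = p (Suc n)"
      using image_halos_disjoint[of s "p (Suc n)"] length_branch[OF p(1), of "Suc n"] by auto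
    then show False
      using 2 p(2) \<open>V \<in> \<V> n\<close> by simp
  qed
qed

end

theorem sigma_compact_if_menger_image_of_irrationals:
  fixes g :: "real \<Rightarrow> 'a::metric_space"
  assumes "continuous_on (-\<rat>) g" "g ` (-\<rat>) = L" "menger_space (top_of_set L)"
  shows "sigma_compact_space (top_of_set L)"
proof -
  obtain W where W: "open W" "covered_by_sigma_compact L (g ` (W \<inter> -\<rat>))"
    "\<And>U K. open U \<Longrightarrow> U \<inter> (-\<rat> - W) \<noteq> {} \<Longrightarrow> compact K \<Longrightarrow> K \<subseteq> L \<Longrightarrow> \<not> g ` (U \<inter> (-\<rat> - W)) \<subseteq> K"
  proof (rule sigma_compact_covered_kernel[where g = g and L = L and P = "-\<rat>"])
  qed (rule that; assumption)
  have "-\<rat> - W = {}"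
  proof (rule ccontr)
    assume "-\<rat> - W \<noteq> {}"
    then interpret hurewicz_tree g L "-\<rat> - W"
      using assms(1,2) W(3) by unfold_locales auto
    show False
      using not_menger_space assms(3) by blast
  qed
  then have "covered_by_sigma_compact L L"
    using W(2) assms(2) covered_by_sigma_compact_subset by blast
  then show ?thesis
    by (rule sigma_compact_space_top_of_set_if_covered)
qed

theorem corollary3p24:
  fixes X :: "'a topology"
  assumes "completely_regular_space X"
    and "menger_space X"
    and "proper_K_lusin X"
  shows "sigma_compact_space X"
proof -
  obtain f :: "'a \<Rightarrow> nat \<Rightarrow> real" and L where
    lusin: "lusin_space (top_of_set L)" and perfect: "perfect_map X (top_of_set L) f"
    using assms(3) unfolding proper_K_lusin_def real_omega_def euclidean_product_topology by blast
  obtain g where "continuous_map irrationals_top (top_of_set L) g"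
    "g ` topspace irrationals_top = L"
    using lusin unfolding lusin_space_def by auto
  then have "continuous_on (-\<rat>) g" "g ` (-\<rat>) = L"
    unfolding irrationals_top_def by auto
  moreover have "continuous_map X (top_of_set L) f" "f ` topspace X = L"
    using perfect unfolding perfect_map_def by simp_all
  then have "menger_space (top_of_set L)"
    by (intro menger_space_continuous_image[OF assms(2)]) simp_all
  ultimately have "sigma_compact_space (top_of_set L)"
    by (rule sigma_compact_if_menger_image_of_irrationals)
  then show ?thesis
    using perfect sigma_compact_space_proper_map_preimage unfolding perfect_map_def by blast
qed

end
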